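(* Let $\mathcal{J}$ be a finite set, $\mathcal{J}_0=\mathcal{J}\cup\{0\}$, $(\Omega,P)$ a Borel probability space and $\mathcal{U}:\Omega\times\mathcal{J}_0\times\mathbb{R}\to\mathbb{R}$ satisfying the regularity and no-indifference assumptions in the context. Assume moreover: (i) for each $\varepsilon\in\Omega$ and $j\in\mathcal{J}$ the map $\delta\mapsto\mathcal{U}_{\varepsilon j}(\delta)$ is invertible; (ii) the random vector $Z_0\in\mathbb{R}^{\mathcal{J}}$ with components $Z_{0j}=\mathcal{U}_{\varepsilon j}^{-1}(\mathcal{U}_{\varepsilon 0}(0))$, $\varepsilon\sim P$, has a non-vanishing density on $\mathbb{R}^{\mathcal{J}}$. Then $\tilde\sigma^{-1}(s)$ has a single element for every $s\in\mathbb{R}^{\mathcal{J}_0}$ with $s_j>0$ for all $j$ and $\sum_j s_j=1$.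
   Context: Regularity: for every $j\in\mathcal{J}_0$ and $\delta\in\mathbb{R}$, $\varepsilon\mapsto\mathcal{U}_{\varepsilon j}(\delta)$ is measurable, and for every $\varepsilon$, $j$, $\delta\mapsto\mathcal{U}_{\varepsilon j}(\delta)$ is increasing and continuous. No indifference: for all distinct $j,j'\in\mathcal{J}_0$ and all $\delta,\delta'$, $P(\mathcal{U}_{\varepsilon j}(\delta)=\mathcal{U}_{\varepsilon j'}(\delta'))=0$. For $\delta\in\mathbb{R}^{\mathcal{J}_0}$, $\sigma_j(\delta)=P(\varepsilon:\mathcal{U}_{\varepsilon j}(\delta_j)\ge\max_{j'\in\mathcal{J}_0}\mathcal{U}_{\varepsilon j'}(\delta_{j'}))$. For $\delta\in\mathbb{R}^{\mathcal{J}}$, $\tilde\sigma(\delta)=\sigma((0,\delta))$ (normalization $\delta_0=0$), and $\tilde\sigma^{-1}(s)=\{\delta\in\mathbb{R}^{\mathcal{J}}:\tilde\sigma(\delta)=s\}$. *)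

theory Defs
  imports "HOL-Probability.Probability"
begin

text \<open>Inside options are indexed by a finite type 'j (the set J); the set
  J0 = J \<union> {0} is modelled by 'j option, with None playing the role of
  the outside option 0.  U eps j d is the utility of option j at mean value d.\<close>

definition share :: "'e measure \<Rightarrow> ('e \<Rightarrow> 'j option \<Rightarrow> real \<Rightarrow> real)
    \<Rightarrow> ('j option \<Rightarrow> real) \<Rightarrow> 'j option \<Rightarrow> real" where
  "share M U \<delta> j = measure M {\<epsilon> \<in> space M. \<forall>j'. U \<epsilon> j' (\<delta> j') \<le> U \<epsilon> j (\<delta> j)}"

definition share_tilde :: "'e measure \<Rightarrow> ('e \<Rightarrow> 'j option \<Rightarrow> real \<Rightarrow> real)
    \<Rightarrow> real^'j \<Rightarrow> 'j option \<Rightarrow> real" where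
  "share_tilde M U \<delta> = share M U (\<lambda>j. case j of None \<Rightarrow> 0 | Some k \<Rightarrow> \<delta> $ k)"

definition share_tilde_inv :: "'e measure \<Rightarrow> ('e \<Rightarrow> 'j option \<Rightarrow> real \<Rightarrow> real)
    \<Rightarrow> ('j option \<Rightarrow> real) \<Rightarrow> (real^'j) set" where
  "share_tilde_inv M U s = {\<delta>. share_tilde M U \<delta> = s}"

end

theory Submission
  imports Defs
begin

text \<open>
  Let \<open>Z\<close> (\<open>tie_point\<close>) be the random vector of the density hypothesis: \<open>Z\<^sub>k\<close> is the mean utility
  at which inside option \<open>k\<close> ties with the outside option. Being real valued, its components
  have vanishing tails.

  Existence is Berry's construction. Call \<open>\<delta>\<close> a subsolution if all inside shares at \<open>\<delta>\<close> are at
  most the targets. A very negative constant vector is a subsolution, and subsolutions are bounded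
  above, since a large \<open>\<delta>\<^sub>k\<close> would push the outside share below its target. The componentwise
  supremum of all subsolutions is again one, because each share is left-continuous in its own
  mean utility (ties are null). It solves every inside equation: otherwise right-continuity would
  allow raising one component, which only lowers the other shares. The outside equation follows
  because shares sum to one.

  Uniqueness: suppose the shares agree at \<open>\<delta>\<close> and \<open>\<delta>'\<close> with \<open>\<delta>\<^sub>k > \<delta>'\<^sub>k\<close>, and let \<open>S\<close> be the options
  whose mean utility does not decrease from \<open>\<delta>\<close> to \<open>\<delta>'\<close>, among them the outside option. Whoever
  chooses from \<open>S\<close> at \<open>\<delta>\<close> still does so at \<open>\<delta>'\<close>. In addition, consumers with \<open>Z > \<delta>'\<close> and
  \<open>Z\<^sub>k < \<delta>\<^sub>k\<close> prefer \<open>k\<close> to all of \<open>S\<close> at \<open>\<delta>\<close> but take the outside option at \<open>\<delta>'\<close>. As \<open>Z\<close> has a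
  positive density, they have positive probability, so the total share of \<open>S\<close> strictly grows.
\<close>

lemma (in prob_space) measure_distributed_open_pos:
  fixes X :: "'a \<Rightarrow> 'b::euclidean_space"
  assumes X: "distributed M lborel X f" and f_pos: "\<And>z. 0 < f z"
    and "open S" "S \<noteq> {}"
  shows "0 < measure M (X -` S \<inter> space M)"
proof (rule ccontr)
  assume "\<not> 0 < measure M (X -` S \<inter> space M)"
  then have "emeasure M (X -` S \<inter> space M) = 0"
    by (simp add: emeasure_eq_measure zero_less_measure_iff)
  moreover have "emeasure M (X -` S \<inter> space M) = emeasure (distr M lborel X) S"
    using X \<open>open S\<close> by (intro emeasure_distr[symmetric]) (auto simp: distributed_def)
  moreover have "distr M lborel X = density lborel f"
    using X by (simp add: distributed_def)
  ultimately have "S \<in> null_sets (density lborel f)"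
    using \<open>open S\<close> by (simp add: null_sets_def)
  then have "AE z in lborel. z \<in> S \<longrightarrow> f z = 0"
    using X by (simp add: null_sets_density_iff distributed_def)
  then have "AE z in lborel. z \<notin> S"
    by eventually_elim (metis f_pos order_less_irrefl)
  then have "S \<in> null_sets lborel"
    using \<open>open S\<close> by (simp add: AE_iff_null_sets)
  then have "negligible S"
    by (simp add: negligible_iff_null_sets null_sets_completionI)
  with open_not_negligible \<open>open S\<close> \<open>S \<noteq> {}\<close> show False by blast
qed

lemma (in finite_measure) tendsto_measure_le_neg_real:
  assumes [measurable]: "X \<in> borel_measurable M"
  shows "(\<lambda>n. measure M {x \<in> space M. X x \<le> - real n}) \<longlonglongrightarrow> 0"
proof -
  have "(\<lambda>n. measure M {x \<in> space M. X x \<le> - real n})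
          \<longlonglongrightarrow> measure M (\<Inter>n. {x \<in> space M. X x \<le> - real n})"
    by (rule finite_Lim_measure_decseq) (auto simp: decseq_def)
  moreover have "(\<Inter>n. {x \<in> space M. X x \<le> - real n}) = {}"
  proof safe
    fix x assume x: "x \<in> (\<Inter>n. {x \<in> space M. X x \<le> - real n})"
    obtain n where "- X x < real n"
      using reals_Archimedean2 by blast
    moreover have "X x \<le> - real n"
      using x by blast
    ultimately show "x \<in> {}" by linarith
  qed
  ultimately show ?thesis by simp
qed

lemma (in finite_measure) tendsto_measure_ge_real:
  assumes "X \<in> borel_measurable M"
  shows "(\<lambda>n. measure M {x \<in> space M. real n \<le> X x}) \<longlonglongrightarrow> 0"
  using tendsto_measure_le_neg_real[of "\<lambda>x. - X x"] assms by simp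

lemma sum_UNIV_option: "(\<Sum>j\<in>UNIV. g j) = g None + (\<Sum>k\<in>UNIV. g (Some k))"
  for g :: "'a::finite option \<Rightarrow> 'b::comm_monoid_add"
  by (simp add: UNIV_option_conv sum.reindex)

locale random_utility_model = prob_space M for M :: "'e measure" +
  fixes U :: "'e \<Rightarrow> 'j::finite option \<Rightarrow> real \<Rightarrow> real"
  assumes measurable_U[measurable]: "(\<lambda>\<epsilon>. U \<epsilon> j x) \<in> borel_measurable M"
    and mono_U: "mono (U \<epsilon> j)"
    and continuous_U: "continuous_on UNIV (U \<epsilon> j)"
    and no_indifference: "j \<noteq> j' \<Longrightarrow> measure M {\<epsilon> \<in> space M. U \<epsilon> j x = U \<epsilon> j' y} = 0"
begin

definition choice_event :: "('j option \<Rightarrow> real) \<Rightarrow> 'j option \<Rightarrow> 'e set" where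
  "choice_event d j = {\<epsilon> \<in> space M. \<forall>j'. U \<epsilon> j' (d j') \<le> U \<epsilon> j (d j)}"

lemma sets_choice_event[measurable]: "choice_event d j \<in> sets M"
  unfolding choice_event_def by measurable

lemma share_eq_measure_choice_event: "share M U d j = measure M (choice_event d j)"
  by (simp add: share_def choice_event_def)

lemma choice_event_mono:
  assumes "d j \<le> d' j" and "\<And>i. i \<noteq> j \<Longrightarrow> d' i \<le> d i"
  shows "choice_event d j \<subseteq> choice_event d' j"
proof
  fix \<epsilon> assume \<epsilon>: "\<epsilon> \<in> choice_event d j"
  have "U \<epsilon> i (d' i) \<le> U \<epsilon> j (d' j)" for i
  proof (cases "i = j")
    case False
    have "U \<epsilon> i (d' i) \<le> U \<epsilon> i (d i)"
      using assms(2)[OF False] mono_U by (simp add: monoD)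
    also have "\<dots> \<le> U \<epsilon> j (d j)"
      using \<epsilon> by (simp add: choice_event_def)
    also have "\<dots> \<le> U \<epsilon> j (d' j)"
      using assms(1) mono_U by (simp add: monoD)
    finally show ?thesis .
  qed simp
  then show "\<epsilon> \<in> choice_event d' j"
    using \<epsilon> by (simp add: choice_event_def)
qed

lemma share_mono:
  assumes "d j \<le> d' j" and "\<And>i. i \<noteq> j \<Longrightarrow> d' i \<le> d i"
  shows "share M U d j \<le> share M U d' j"
  unfolding share_eq_measure_choice_event
  using assms by (intro finite_measure_mono choice_event_mono) auto

lemma AE_no_tie: "AE \<epsilon> in M. \<forall>i. i \<noteq> j \<longrightarrow> U \<epsilon> i (d i) \<noteq> U \<epsilon> j (d j)"
proof (subst AE_all_countable, intro allI)
  fix i show "AE \<epsilon> in M. i \<noteq> j \<longrightarrow> U \<epsilon> i (d i) \<noteq> U \<epsilon> j (d j)"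
  proof (cases "i = j")
    case False
    then show ?thesis
      using no_indifference[OF False, of "d i" "d j"]
      by (intro AE_I'[of "{\<epsilon> \<in> space M. U \<epsilon> i (d i) = U \<epsilon> j (d j)}"])
        (auto simp: null_sets_def emeasure_eq_measure)
  qed simp
qed

lemma choice_event_tie:
  "\<epsilon> \<in> choice_event d i \<Longrightarrow> \<epsilon> \<in> choice_event d j \<Longrightarrow> U \<epsilon> i (d i) = U \<epsilon> j (d j)"
  by (auto simp: choice_event_def intro: antisym)

lemma measure_UN_choice_event: "measure M (\<Union>j\<in>J. choice_event d j) = (\<Sum>j\<in>J. share M U d j)"
  unfolding share_eq_measure_choice_event
proof (rule measure_UNION_AE)
  show "pairwise (\<lambda>i j. AE \<epsilon> in M. \<epsilon> \<notin> choice_event d i \<or> \<epsilon> \<notin> choice_event d j) J"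
  proof (rule pairwiseI)
    fix i j :: "'j option" assume "i \<noteq> j"
    show "AE \<epsilon> in M. \<epsilon> \<notin> choice_event d i \<or> \<epsilon> \<notin> choice_event d j"
      using AE_no_tie[of j d] by eventually_elim (use \<open>i \<noteq> j\<close> choice_event_tie in blast)
  qed
qed (auto simp: fmeasurable_eq_sets)

lemma ex_choice_event:
  assumes "\<epsilon> \<in> space M"
  shows "\<exists>j. \<epsilon> \<in> choice_event d j"
proof -
  have "Max (range (\<lambda>j. U \<epsilon> j (d j))) \<in> range (\<lambda>j. U \<epsilon> j (d j))"
    by (intro Max_in) auto
  then obtain m where "U \<epsilon> m (d m) = Max (range (\<lambda>j. U \<epsilon> j (d j)))"
    by (metis imageE)
  then have "\<epsilon> \<in> choice_event d m"
    using assms by (simp add: choice_event_def)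
  then show ?thesis ..
qed

lemma sum_share: "(\<Sum>j\<in>UNIV. share M U d j) = 1"
proof -
  have cover: "(\<Union>j. choice_event d j) = space M"
    using ex_choice_event by (auto simp: choice_event_def)
  have "(\<Sum>j\<in>UNIV. share M U d j) = measure M (\<Union>j. choice_event d j)"
    by (rule measure_UN_choice_event[symmetric])
  also have "\<dots> = 1"
    unfolding cover by (rule prob_space)
  finally show ?thesis .
qed

lemma share_outside: "share M U d None = 1 - (\<Sum>k\<in>UNIV. share M U d (Some k))"
  using sum_share[of d] unfolding sum_UNIV_option by linarith

text \<open>A consumer's new favourite is either in \<open>S\<close>, or her old choice from \<open>S\<close>, which only
  improved, ties with it.\<close>

lemma UN_choice_event_mono:
  assumes "\<And>j. j \<in> S \<Longrightarrow> d j \<le> d' j" and "\<And>j. j \<notin> S \<Longrightarrow> d' j \<le> d j"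
  shows "(\<Union>j\<in>S. choice_event d j) \<subseteq> (\<Union>j\<in>S. choice_event d' j)"
proof
  fix \<epsilon> assume "\<epsilon> \<in> (\<Union>j\<in>S. choice_event d j)"
  then obtain i where i: "i \<in> S" "\<epsilon> \<in> choice_event d i" by blast
  then have "\<epsilon> \<in> space M" by (simp add: choice_event_def)
  then obtain m where m: "\<epsilon> \<in> choice_event d' m"
    using ex_choice_event by blast
  show "\<epsilon> \<in> (\<Union>j\<in>S. choice_event d' j)"
  proof (cases "m \<in> S")
    case False
    have "U \<epsilon> m (d' m) \<le> U \<epsilon> m (d m)"
      using assms(2)[OF False] mono_U by (simp add: monoD)
    also have "\<dots> \<le> U \<epsilon> i (d i)"
      using i(2) by (simp add: choice_event_def)
    also have "\<dots> \<le> U \<epsilon> i (d' i)"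
      using assms(1)[OF i(1)] mono_U by (simp add: monoD)
    finally have "\<epsilon> \<in> choice_event d' i"
      using m by (auto simp: choice_event_def intro: order_trans)
    then show ?thesis using i(1) by blast
  qed (use m in blast)
qed

lemma sum_share_plus_switchers_le:
  assumes "\<And>j. j \<in> S \<Longrightarrow> d j \<le> d' j" and "\<And>j. j \<notin> S \<Longrightarrow> d' j \<le> d j"
    and "D \<in> sets M" and "D \<subseteq> (\<Union>j\<in>S. choice_event d' j)"
    and "D \<inter> (\<Union>j\<in>S. choice_event d j) = {}"
  shows "(\<Sum>j\<in>S. share M U d j) + measure M D \<le> (\<Sum>j\<in>S. share M U d' j)"
proof -
  have "(\<Sum>j\<in>S. share M U d j) + measure M D = measure M ((\<Union>j\<in>S. choice_event d j) \<union> D)"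
    using assms(3,5) by (auto simp: measure_UN_choice_event[symmetric] intro!: finite_measure_Union[symmetric])
  also have "\<dots> \<le> measure M (\<Union>j\<in>S. choice_event d' j)"
    using UN_choice_event_mono[OF assms(1,2)] assms(3,4) by (intro finite_measure_mono) auto
  also have "\<dots> = (\<Sum>j\<in>S. share M U d' j)"
    by (rule measure_UN_choice_event)
  finally show ?thesis .
qed

lemma tendsto_U:
  assumes "y \<longlonglongrightarrow> x"
  shows "(\<lambda>n. U \<epsilon> j (y n)) \<longlonglongrightarrow> U \<epsilon> j x"
proof -
  have "isCont (U \<epsilon> j) x"
    using continuous_U[of \<epsilon> j] by (simp add: continuous_on_eq_continuous_at)
  then show ?thesis
    using assms by (rule isCont_tendsto_compose)
qed

text \<open>Consumers strictly preferring \<open>j\<close> keep doing so after a small decrease of \<open>d j\<close>; only those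
  indifferent between \<open>j\<close> and another option can be lost, and they form a null set.\<close>

lemma tendsto_share_from_below:
  assumes "incseq y" and "y \<longlonglongrightarrow> d j"
  shows "(\<lambda>n. share M U (d(j := y n)) j) \<longlonglongrightarrow> share M U d j"
proof -
  define A where "A n = choice_event (d(j := y n)) j" for n
  have A_sub: "A n \<subseteq> choice_event d j" for n
    unfolding A_def using incseq_le[OF assms] by (intro choice_event_mono) auto
  have "incseq A"
    using \<open>incseq y\<close> unfolding A_def incseq_def by (intro allI impI choice_event_mono) auto
  have "(\<lambda>n. measure M (A n)) \<longlonglongrightarrow> measure M (\<Union>n. A n)"
    by (rule finite_Lim_measure_incseq[OF _ \<open>incseq A\<close>]) (auto simp: A_def)
  moreover have "measure M (\<Union>n. A n) = measure M (choice_event d j)"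
  proof (rule measure_eq_AE)
    show "AE \<epsilon> in M. \<epsilon> \<in> (\<Union>n. A n) \<longleftrightarrow> \<epsilon> \<in> choice_event d j"
      using AE_no_tie[of j d]
    proof eventually_elim
      case (elim \<epsilon>)
      show ?case
      proof
        assume \<epsilon>: "\<epsilon> \<in> choice_event d j"
        then have "U \<epsilon> i (d i) < U \<epsilon> j (d j)" if "i \<noteq> j" for i
          using elim that by (force simp: choice_event_def order_less_le)
        then have "\<forall>\<^sub>F n in sequentially. U \<epsilon> i (d i) < U \<epsilon> j (y n)" if "i \<noteq> j" for i
          using that by (intro order_tendstoD(1)[OF tendsto_U[OF assms(2)]])
        then have "\<forall>\<^sub>F n in sequentially. \<forall>i. i \<noteq> j \<longrightarrow> U \<epsilon> i (d i) < U \<epsilon> j (y n)"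
          by (intro eventually_all_finite) (auto intro: eventually_mono)
        then obtain N where "\<And>i. i \<noteq> j \<Longrightarrow> U \<epsilon> i (d i) < U \<epsilon> j (y N)"
          by (auto simp: eventually_sequentially)
        then have "\<epsilon> \<in> A N"
          using \<epsilon> by (auto simp: A_def choice_event_def less_imp_le)
        then show "\<epsilon> \<in> (\<Union>n. A n)" by blast
      qed (use A_sub in blast)
    qed
  qed (auto simp: A_def)
  ultimately show ?thesis
    by (simp add: A_def share_eq_measure_choice_event)
qed

lemma tendsto_share_from_above:
  assumes "decseq y" and "y \<longlonglongrightarrow> d j"
  shows "(\<lambda>n. share M U (d(j := y n)) j) \<longlonglongrightarrow> share M U d j"
proof -
  define A where "A n = choice_event (d(j := y n)) j" for n
  have "decseq A"
    using \<open>decseq y\<close> unfolding A_def decseq_def by (intro allI impI choice_event_mono) auto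
  have "(\<lambda>n. measure M (A n)) \<longlonglongrightarrow> measure M (\<Inter>n. A n)"
    by (rule finite_Lim_measure_decseq[OF _ \<open>decseq A\<close>]) (auto simp: A_def)
  moreover have "(\<Inter>n. A n) = choice_event d j"
  proof
    show "choice_event d j \<subseteq> (\<Inter>n. A n)"
      unfolding A_def using decseq_ge[OF assms] by (intro INT_greatest choice_event_mono) auto
    show "(\<Inter>n. A n) \<subseteq> choice_event d j"
    proof
      fix \<epsilon> assume \<epsilon>: "\<epsilon> \<in> (\<Inter>n. A n)"
      have "U \<epsilon> i (d i) \<le> U \<epsilon> j (d j)" for i
      proof (cases "i = j")
        case False
        show ?thesis
        proof (rule LIMSEQ_le_const[OF tendsto_U[OF assms(2)]], intro exI allI impI)
          fix n
          have "\<epsilon> \<in> A n"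
            using \<epsilon> by blast
          then show "U \<epsilon> i (d i) \<le> U \<epsilon> j (y n)"
            using False by (auto simp: A_def choice_event_def dest: spec[of _ i])
        qed
      qed simp
      then show "\<epsilon> \<in> choice_event d j"
        using \<epsilon> by (auto simp: A_def choice_event_def)
    qed
  qed
  ultimately show ?thesis
    by (simp add: A_def share_eq_measure_choice_event)
qed

end

definition zero_outside :: "real^'j \<Rightarrow> 'j option \<Rightarrow> real" where
  "zero_outside \<delta> j = (case j of None \<Rightarrow> 0 | Some k \<Rightarrow> \<delta> $ k)"

lemma zero_outside_simps[simp]: "zero_outside \<delta> None = 0" "zero_outside \<delta> (Some k) = \<delta> $ k"
  by (simp_all add: zero_outside_def)

lemma zero_outside_update:
  "zero_outside (\<chi> i. if i = k then x else \<delta> $ i) = (zero_outside \<delta>)(Some k := x)"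
  by (auto simp: fun_eq_iff zero_outside_def split: option.split)

lemma share_tilde_eq_share: "share_tilde M U \<delta> = share M U (zero_outside \<delta>)"
  by (simp add: share_tilde_def zero_outside_def[abs_def])

locale invertible_random_utility_model = random_utility_model M U
  for M :: "'e measure" and U :: "'e \<Rightarrow> 'j::finite option \<Rightarrow> real \<Rightarrow> real" +
  assumes bij_inside: "bij (U \<epsilon> (Some k))"
begin

definition tie_point :: "'e \<Rightarrow> real^'j" where
  "tie_point \<epsilon> = (\<chi> k. inv (U \<epsilon> (Some k)) (U \<epsilon> None 0))"

lemma strict_mono_inside: "strict_mono (U \<epsilon> (Some k))"
proof (rule strict_monoI)
  fix x y :: real assume "x < y"
  then have "U \<epsilon> (Some k) x \<le> U \<epsilon> (Some k) y"
    using mono_U by (simp add: monoD)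
  moreover have "U \<epsilon> (Some k) x \<noteq> U \<epsilon> (Some k) y"
    using \<open>x < y\<close> bij_inside[of \<epsilon> k] by (auto dest: bij_is_inj injD)
  ultimately show "U \<epsilon> (Some k) x < U \<epsilon> (Some k) y" by simp
qed

lemma U_tie_point: "U \<epsilon> (Some k) (tie_point \<epsilon> $ k) = U \<epsilon> None 0"
  using bij_inside[of \<epsilon> k] by (simp add: tie_point_def bij_is_surj surj_f_inv_f)

lemma tie_point_le_iff: "tie_point \<epsilon> $ k \<le> x \<longleftrightarrow> U \<epsilon> None 0 \<le> U \<epsilon> (Some k) x"
  by (metis U_tie_point strict_mono_inside strict_mono_less_eq)

lemma tie_point_less_iff: "tie_point \<epsilon> $ k < x \<longleftrightarrow> U \<epsilon> None 0 < U \<epsilon> (Some k) x"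
  by (metis U_tie_point strict_mono_inside strict_mono_less)

lemma measurable_tie_point[measurable]: "(\<lambda>\<epsilon>. tie_point \<epsilon> $ k) \<in> borel_measurable M"
  unfolding borel_measurable_iff_le tie_point_le_iff by measurable

lemma choice_event_outside_if_below_tie_point:
  assumes "\<epsilon> \<in> space M" and "\<And>k. \<delta> $ k < tie_point \<epsilon> $ k"
  shows "\<epsilon> \<in> choice_event (zero_outside \<delta>) None"
proof -
  have "U \<epsilon> (Some k) (\<delta> $ k) < U \<epsilon> None 0" for k
    using assms(2)[of k] by (metis not_le tie_point_le_iff)
  then have "U \<epsilon> j (zero_outside \<delta> j) \<le> U \<epsilon> None 0" for j
    by (cases j) (auto intro: less_imp_le)
  then show ?thesis
    using assms(1) by (simp add: choice_event_def)
qed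

definition subsolutions :: "('j option \<Rightarrow> real) \<Rightarrow> (real^'j) set" where
  "subsolutions s = {\<delta>. \<forall>k. share_tilde M U \<delta> (Some k) \<le> s (Some k)}"

definition max_subsolution :: "('j option \<Rightarrow> real) \<Rightarrow> real^'j" where
  "max_subsolution s = (\<chi> k. SUP \<delta>\<in>subsolutions s. \<delta> $ k)"

lemma constant_subsolution:
  assumes "\<And>k. 0 < s (Some k)"
  shows "\<exists>x. (\<chi> k. x) \<in> subsolutions s"
proof -
  have "\<forall>\<^sub>F n in sequentially. \<forall>k. measure M {\<epsilon> \<in> space M. tie_point \<epsilon> $ k \<le> - real n} < s (Some k)"
    using assms by (intro eventually_all_finite order_tendstoD(2)[OF tendsto_measure_le_neg_real]) auto
  then obtain n where n: "\<And>k. measure M {\<epsilon> \<in> space M. tie_point \<epsilon> $ k \<le> - real n} < s (Some k)"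
    by (auto simp: eventually_sequentially)
  have "share_tilde M U (\<chi> k. - real n) (Some k) \<le> measure M {\<epsilon> \<in> space M. tie_point \<epsilon> $ k \<le> - real n}"
    for k
    unfolding share_tilde_eq_share share_eq_measure_choice_event
    by (intro finite_measure_mono) (auto simp: choice_event_def tie_point_le_iff dest: spec[of _ None])
  then have "share_tilde M U (\<chi> k. - real n) (Some k) \<le> s (Some k)" for k
    using n[of k] by (meson less_imp_le order_trans)
  then show ?thesis
    by (auto simp: subsolutions_def)
qed

lemma bdd_above_subsolutions:
  assumes "0 < s None" and "(\<Sum>j\<in>UNIV. s j) = 1"
  shows "bdd_above ((\<lambda>\<delta>. \<delta> $ k) ` subsolutions s)"
proof -
  have "\<forall>\<^sub>F n in sequentially. \<forall>k. measure M {\<epsilon> \<in> space M. real n \<le> tie_point \<epsilon> $ k} < s None"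
    using assms by (intro eventually_all_finite order_tendstoD(2)[OF tendsto_measure_ge_real]) auto
  then obtain n where n: "\<And>k. measure M {\<epsilon> \<in> space M. real n \<le> tie_point \<epsilon> $ k} < s None"
    by (auto simp: eventually_sequentially)
  have "\<delta> $ k \<le> real n" if \<delta>: "\<delta> \<in> subsolutions s" for \<delta>
  proof (rule ccontr)
    assume "\<not> \<delta> $ k \<le> real n"
    have "choice_event (zero_outside \<delta>) None \<subseteq> {\<epsilon> \<in> space M. real n \<le> tie_point \<epsilon> $ k}"
    proof
      fix \<epsilon> assume "\<epsilon> \<in> choice_event (zero_outside \<delta>) None"
      then have "\<epsilon> \<in> space M" and "\<not> tie_point \<epsilon> $ k < \<delta> $ k"
        by (auto simp: choice_event_def tie_point_less_iff not_less dest: spec[of _ "Some k"])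
      then show "\<epsilon> \<in> {\<epsilon> \<in> space M. real n \<le> tie_point \<epsilon> $ k}"
        using \<open>\<not> \<delta> $ k \<le> real n\<close> by auto
    qed
    then have "share_tilde M U \<delta> None \<le> measure M {\<epsilon> \<in> space M. real n \<le> tie_point \<epsilon> $ k}"
      unfolding share_tilde_eq_share share_eq_measure_choice_event
      by (intro finite_measure_mono) auto
    also have "\<dots> < s None" by (rule n)
    also have "s None = 1 - (\<Sum>k\<in>UNIV. s (Some k))"
      using assms(2) unfolding sum_UNIV_option by linarith
    also have "\<dots> \<le> 1 - (\<Sum>k\<in>UNIV. share_tilde M U \<delta> (Some k))"
      using \<delta> by (auto simp: subsolutions_def intro: sum_mono)
    also have "\<dots> = share_tilde M U \<delta> None"
      by (simp add: share_tilde_eq_share share_outside)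
    finally show False by simp
  qed
  then show ?thesis by (rule bdd_aboveI2)
qed

lemma subsolution_raise:
  assumes "\<delta> \<in> subsolutions s" and "share_tilde M U \<delta> (Some k) < s (Some k)"
  shows "\<exists>x > \<delta> $ k. (\<chi> i. if i = k then x else \<delta> $ i) \<in> subsolutions s"
proof -
  define y where "y n = \<delta> $ k + inverse (real (Suc n))" for n
  have "decseq y"
    by (simp add: decseq_def y_def le_imp_inverse_le)
  moreover have "y \<longlonglongrightarrow> zero_outside \<delta> (Some k)"
    unfolding y_def using tendsto_add[OF tendsto_const LIMSEQ_inverse_real_of_nat] by simp
  ultimately have "(\<lambda>n. share M U ((zero_outside \<delta>)(Some k := y n)) (Some k))
                     \<longlonglongrightarrow> share_tilde M U \<delta> (Some k)"
    unfolding share_tilde_eq_share by (rule tendsto_share_from_above)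
  from order_tendstoD(2)[OF this assms(2)] obtain N
    where N: "share M U ((zero_outside \<delta>)(Some k := y N)) (Some k) < s (Some k)"
    by (auto simp: eventually_sequentially)
  define \<delta>' where "\<delta>' = (\<chi> i. if i = k then y N else \<delta> $ i)"
  have "share_tilde M U \<delta>' (Some k') \<le> s (Some k')" for k'
  proof (cases "k' = k")
    case True
    then show ?thesis
      using N by (simp add: \<delta>'_def share_tilde_eq_share zero_outside_update)
  next
    case False
    have "share_tilde M U \<delta>' (Some k') \<le> share_tilde M U \<delta> (Some k')"
      unfolding share_tilde_eq_share \<delta>'_def zero_outside_update
      using False by (intro share_mono) (auto simp: y_def)
    also have "\<dots> \<le> s (Some k')"
      using assms(1) by (simp add: subsolutions_def)
    finally show ?thesis .
  qed
  moreover have "\<delta> $ k < y N"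
    by (simp add: y_def)
  ultimately show ?thesis
    by (auto simp: subsolutions_def \<delta>'_def)
qed

context
  fixes s :: "'j option \<Rightarrow> real"
  assumes s_pos: "\<And>j. 0 < s j" and s_sum: "(\<Sum>j\<in>UNIV. s j) = 1"
begin

lemma subsolution_le_max_subsolution:
  assumes "\<delta> \<in> subsolutions s"
  shows "\<delta> $ k \<le> max_subsolution s $ k"
  unfolding max_subsolution_def
  using cSUP_upper[OF assms bdd_above_subsolutions[OF s_pos s_sum]] by simp

lemma less_max_subsolution_iff:
  "x < max_subsolution s $ k \<longleftrightarrow> (\<exists>\<delta>\<in>subsolutions s. x < \<delta> $ k)"
proof -
  have "subsolutions s \<noteq> {}"
    using constant_subsolution s_pos by blast
  then show ?thesis
    unfolding max_subsolution_def
    using bdd_above_subsolutions s_pos s_sum by (simp add: less_cSUP_iff)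
qed

lemma max_subsolution_mem: "max_subsolution s \<in> subsolutions s"
proof -
  let ?\<delta> = "max_subsolution s"
  have "share_tilde M U ?\<delta> (Some k) \<le> s (Some k)" for k
  proof -
    define y where "y n = ?\<delta> $ k - inverse (real (Suc n))" for n
    have "incseq y"
      by (simp add: incseq_def y_def le_imp_inverse_le)
    moreover have "y \<longlonglongrightarrow> zero_outside ?\<delta> (Some k)"
      unfolding y_def using tendsto_diff[OF tendsto_const LIMSEQ_inverse_real_of_nat] by simp
    ultimately have lim: "(\<lambda>n. share M U ((zero_outside ?\<delta>)(Some k := y n)) (Some k))
                            \<longlonglongrightarrow> share_tilde M U ?\<delta> (Some k)"
      unfolding share_tilde_eq_share by (rule tendsto_share_from_below)
    have "share M U ((zero_outside ?\<delta>)(Some k := y n)) (Some k) \<le> s (Some k)" for n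
    proof -
      have "y n < ?\<delta> $ k"
        by (simp add: y_def)
      then obtain \<delta> where \<delta>: "\<delta> \<in> subsolutions s" "y n < \<delta> $ k"
        by (auto simp: less_max_subsolution_iff)
      have "share M U ((zero_outside ?\<delta>)(Some k := y n)) (Some k) \<le> share M U (zero_outside \<delta>) (Some k)"
      proof (rule share_mono)
        fix j assume "j \<noteq> Some k"
        then show "zero_outside \<delta> j \<le> ((zero_outside ?\<delta>)(Some k := y n)) j"
          using subsolution_le_max_subsolution[OF \<delta>(1)] by (cases j) auto
      qed (use \<delta>(2) in simp)
      also have "\<dots> \<le> s (Some k)"
        using \<delta>(1) by (simp add: subsolutions_def share_tilde_eq_share)
      finally show ?thesis .
    qed
    with lim show ?thesis
      by (intro LIMSEQ_le_const2) auto
  qed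
  then show ?thesis
    by (simp add: subsolutions_def)
qed

lemma share_tilde_max_subsolution: "share_tilde M U (max_subsolution s) = s"
proof -
  have inside: "share_tilde M U (max_subsolution s) (Some k) = s (Some k)" for k
  proof (rule ccontr)
    assume "share_tilde M U (max_subsolution s) (Some k) \<noteq> s (Some k)"
    with max_subsolution_mem have "share_tilde M U (max_subsolution s) (Some k) < s (Some k)"
      by (auto simp: subsolutions_def order_less_le)
    then obtain x where
      "x > max_subsolution s $ k"
      "(\<chi> i. if i = k then x else max_subsolution s $ i) \<in> subsolutions s"
      using subsolution_raise[OF max_subsolution_mem] by blast
    with subsolution_le_max_subsolution[of _ k] show False
      by fastforce
  qed
  have "share_tilde M U (max_subsolution s) None = 1 - (\<Sum>k\<in>UNIV. s (Some k))"
    by (simp add: share_tilde_eq_share share_outside inside[unfolded share_tilde_eq_share])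
  also have "\<dots> = s None"
    using s_sum unfolding sum_UNIV_option by linarith
  finally show ?thesis
    using inside by (intro ext) (metis option.exhaust)
qed

end

lemma share_tilde_eq_imp_le:
  assumes density: "distributed M lborel tie_point f" "\<And>z. 0 < f z"
    and eq: "share_tilde M U \<delta> = share_tilde M U \<delta>'"
  shows "\<delta> $ k \<le> \<delta>' $ k"
proof (rule ccontr)
  assume "\<not> \<delta> $ k \<le> \<delta>' $ k"
  define d where "d = zero_outside \<delta>"
  define d' where "d' = zero_outside \<delta>'"
  define S where "S = {j. d j \<le> d' j}"
  define b :: "real^'j" where "b = (\<chi> i. if i = k then \<delta> $ k else \<delta>' $ i + 1)"
  define D where "D = tie_point -` box \<delta>' b \<inter> space M"
  have "(\<delta>' + b) /\<^sub>R 2 \<in> box \<delta>' b"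
    using \<open>\<not> \<delta> $ k \<le> \<delta>' $ k\<close> by (auto simp: mem_box_cart b_def field_simps)
  then have "0 < measure M D"
    unfolding D_def using density by (intro measure_distributed_open_pos) auto
  have "D \<in> sets M"
    using density unfolding D_def distributed_def by (auto intro: measurable_sets)
  have D_tie: "\<delta>' $ i < tie_point \<epsilon> $ i" "tie_point \<epsilon> $ k < \<delta> $ k" if "\<epsilon> \<in> D" for \<epsilon> i
    using that by (auto simp: D_def mem_box_cart b_def dest: spec[of _ k])
  have D_outside: "\<epsilon> \<in> choice_event d' None" if "\<epsilon> \<in> D" for \<epsilon>
    using that D_tie(1) unfolding d'_def
    by (intro choice_event_outside_if_below_tie_point) (auto simp: D_def)
  have "None \<in> S"
    by (simp add: S_def d_def d'_def)
  with D_outside have D_sub: "D \<subseteq> (\<Union>j\<in>S. choice_event d' j)"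
    by blast
  have D_disj: "D \<inter> (\<Union>j\<in>S. choice_event d j) = {}"
  proof (safe, simp)
    fix \<epsilon> j assume "\<epsilon> \<in> D" "j \<in> S" "\<epsilon> \<in> choice_event d j"
    have "U \<epsilon> j (d j) \<le> U \<epsilon> j (d' j)"
      using \<open>j \<in> S\<close> mono_U by (simp add: S_def monoD)
    also have "\<dots> \<le> U \<epsilon> None 0"
      using D_outside[OF \<open>\<epsilon> \<in> D\<close>] by (simp add: choice_event_def d'_def)
    also have "\<dots> < U \<epsilon> (Some k) (d (Some k))"
      using D_tie(2)[OF \<open>\<epsilon> \<in> D\<close>] by (simp add: d_def tie_point_less_iff)
    also have "\<dots> \<le> U \<epsilon> j (d j)"
      using \<open>\<epsilon> \<in> choice_event d j\<close> by (simp add: choice_event_def)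
    finally show False by simp
  qed
  have "(\<Sum>j\<in>S. share M U d j) + measure M D \<le> (\<Sum>j\<in>S. share M U d' j)"
    using \<open>D \<in> sets M\<close> D_sub D_disj by (intro sum_share_plus_switchers_le) (auto simp: S_def)
  with eq \<open>0 < measure M D\<close> show False
    by (simp add: d_def d'_def share_tilde_eq_share)
qed

lemma inj_share_tilde:
  assumes "distributed M lborel tie_point f" and "\<And>z. 0 < f z"
  shows "inj (share_tilde M U)"
  by (rule injI) (metis assms antisym vec_eq_iff share_tilde_eq_imp_le)

end

theorem theorem4:
  fixes M :: "'e::topological_space measure"
    and U :: "'e \<Rightarrow> ('j::finite) option \<Rightarrow> real \<Rightarrow> real"
  assumes "prob_space M"
    and "sets M = sets borel"
    and meas: "\<And>j \<delta>. (\<lambda>\<epsilon>. U \<epsilon> j \<delta>) \<in> borel_measurable M"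
    and incr: "\<And>\<epsilon> j. mono (U \<epsilon> j)"
    and cont: "\<And>\<epsilon> j. continuous_on UNIV (U \<epsilon> j)"
    and no_indiff: "\<And>j j' \<delta> \<delta>'. j \<noteq> j' \<Longrightarrow>
                     measure M {\<epsilon> \<in> space M. U \<epsilon> j \<delta> = U \<epsilon> j' \<delta>'} = 0"
    and invertible: "\<And>\<epsilon> j. bij (U \<epsilon> (Some j))"
    and density: "\<exists>f. distributed M lborel
                      (\<lambda>\<epsilon>. \<chi> j. inv (U \<epsilon> (Some j)) (U \<epsilon> None 0)) f
                    \<and> (\<forall>z. f z > 0)"
  shows "\<forall>s :: 'j option \<Rightarrow> real. (\<forall>j. s j > 0) \<and> (\<Sum>j\<in>UNIV. s j) = 1
           \<longrightarrow> (\<exists>!\<delta>. \<delta> \<in> share_tilde_inv M U s)"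
proof -
  interpret invertible_random_utility_model M U
    by (intro invertible_random_utility_model.intro random_utility_model.intro
        invertible_random_utility_model_axioms.intro random_utility_model_axioms.intro)
      (use assms in auto)
  obtain f where "distributed M lborel tie_point f" and "\<And>z. 0 < f z"
    using density by (auto simp: tie_point_def[abs_def])
  then have inj: "inj (share_tilde M U)"
    by (rule inj_share_tilde)
  show ?thesis
  proof (intro allI impI)
    fix s :: "'j option \<Rightarrow> real"
    assume "(\<forall>j. s j > 0) \<and> (\<Sum>j\<in>UNIV. s j) = 1"
    then have "share_tilde M U (max_subsolution s) = s"
      by (intro share_tilde_max_subsolution) auto
    then show "\<exists>!\<delta>. \<delta> \<in> share_tilde_inv M U s"
      using inj by (auto simp: share_tilde_inv_def inj_eq)
  qed
qed

end
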